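(* Let $q\in\mathbb{N}\setminus\{1\}$, let $X$ be the geometric armadillo tail with parameter $r=\frac1q$, and let $k>2$ be an integer. Then there exists a saddle connection, called $\mathrm{bsc}_k'$, namely the straight-line trajectory of slope $\frac{q}{2q-1}$ starting at the singular point $(1+\frac1q+\dots+\frac1{q^{k-1}},0)$ (the lower right vertex of $\square_k$): this trajectory reaches the singularity again after finite length without passing through it in between.
   Context: Set $l_k=q^{-(k-1)}$, $s_k=l_1+\dots+l_k$ ($s_0=0$), and $\square_k=[s_{k-1},s_k]\times[0,l_k]\subset\mathbb{R}^2$. The geometric armadillo tail with parameter $\frac1q$ is obtained from $P=\bigcup_k\square_k$ by gluing the top edge of each $\square_k$ to its bottom edge by vertical translation, and for each $k\ge1$ gluing $\{s_k\}\times[l_{k+1},l_k]$ by horizontal translation to $\{0\}\times[l_{k+1},l_k]$; then taking the metric completion, in which all vertices of $P$ become a single wild singularity. Trajectories and slopes are computed in the polygonal representation $P$ with these gluings. A saddle connection is a closed straight-line segment from the singularity to itself with no singular point in its interior. *)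

theory Defs
  imports "HOL-Analysis.Analysis"
begin

definition side :: "nat \<Rightarrow> nat \<Rightarrow> real" where
  "side q k = (1 / real q) ^ (k - 1)"

definition spos :: "nat \<Rightarrow> nat \<Rightarrow> real" where
  "spos q k = (\<Sum>i = 1..k. side q i)"

definition square :: "nat \<Rightarrow> nat \<Rightarrow> (real \<times> real) set" where
  "square q k = {spos q (k - 1) .. spos q k} \<times> {0 .. side q k}"

definition polygon :: "nat \<Rightarrow> (real \<times> real) set" where
  "polygon q = (\<Union>k\<in>{1..}. square q k)"

text \<open>The vertices of the polygon; they all represent the single (wild) singularity.\<close>
definition singular_pts :: "nat \<Rightarrow> (real \<times> real) set" where
  "singular_pts q =
     {(spos q k, 0) | k. True}
   \<union> {(0, side q k) | k. k \<ge> 1}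
   \<union> {(spos q k, side q k) | k. k \<ge> 1}
   \<union> {(spos q (k - 1), side q k) | k. k \<ge> 1}"

text \<open>Edge gluings (points in the interiors of glued edges): top edge of each square to its
  bottom edge by vertical translation, and the part of the right edge of square k above
  square k+1 to the left edge part at the same heights by horizontal translation.\<close>
definition glue1 :: "nat \<Rightarrow> real \<times> real \<Rightarrow> real \<times> real \<Rightarrow> bool" where
  "glue1 q b a \<longleftrightarrow>
     (\<exists>k\<ge>1. snd b = side q k \<and> spos q (k - 1) < fst b \<and> fst b < spos q k \<and> a = (fst b, 0))
   \<or> (\<exists>k\<ge>1. fst b = spos q k \<and> side q (Suc k) < snd b \<and> snd b < side q k \<and> a = (0, snd b))"

definition glued :: "nat \<Rightarrow> real \<times> real \<Rightarrow> real \<times> real \<Rightarrow> bool" where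
  "glued q b a \<longleftrightarrow> glue1 q b a \<or> glue1 q a b"

definition saddle_connection_from ::
  "nat \<Rightarrow> real \<times> real \<Rightarrow> real \<times> real \<Rightarrow> bool" where
  "saddle_connection_from q p d \<longleftrightarrow>
     p \<in> singular_pts q \<and>
     (\<exists>n :: nat. \<exists>a b :: nat \<Rightarrow> real \<times> real. \<exists>t :: nat \<Rightarrow> real.
        n \<ge> 1 \<and> a 0 = p \<and>
        (\<forall>i<n. t i > 0 \<and> b i = a i + t i *\<^sub>R d \<and> closed_segment (a i) (b i) \<subseteq> polygon q) \<and>
        (\<forall>i. Suc i < n \<longrightarrow> glued q (b i) (a (Suc i)) \<and> b i \<notin> singular_pts q) \<and>
        (\<forall>i<n. open_segment (a i) (b i) \<inter> singular_pts q = {}) \<and>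
        b (n - 1) \<in> singular_pts q)"

end

theory Submission
  imports Defs
begin

(* Write w = l_(k+1) and rise h = q h / (2q - 1) for the height the trajectory gains over a
   horizontal run h.  From the lower right corner of square k the trajectory crosses square k+1 and
   re-enters square 1 on the left at height rise w.  It then makes q - 1 laps: lap r crosses square 1,
   climbs through the top edges of squares 1, ..., k (re-entering at the bottom each time) and leaves
   square k on the right at height (r+1) rise w, which is glued back to the left edge of square 1.
   Climbing l_(j+1) takes a run of (2q - 1) l_(j+2) = 2 l_(j+1) - l_(j+2), so lap r meets the top of
   square j at s_j - l_(j+1) - r w for every j; for the last lap and j = k this is s_(k-1), a vertex.
   Every segment lies in one square or two adjacent squares, in a rectangle whose interior contains
   no vertex. *)

section \<open>Squares and vertices of the armadillo tail\<close>

lemma side_pos: "q \<ge> 1 \<Longrightarrow> 0 < side q j"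
  by (simp add: side_def)

lemma side_1 [simp]: "side q 1 = 1" "side q (Suc 0) = 1"
  by (simp_all add: side_def)

lemma side_eq_mult_side_Suc: "q \<ge> 1 \<Longrightarrow> j \<ge> 1 \<Longrightarrow> side q j = real q * side q (Suc j)"
  by (cases j) (simp_all add: side_def)

lemma side_antimono: "q \<ge> 1 \<Longrightarrow> i \<le> j \<Longrightarrow> side q j \<le> side q i"
  unfolding side_def by (rule power_decreasing) auto

lemma spos_0 [simp]: "spos q 0 = 0"
  by (simp add: spos_def)

lemma spos_Suc: "spos q (Suc j) = spos q j + side q (Suc j)"
  by (simp add: spos_def)

lemma strict_mono_spos: "q \<ge> 1 \<Longrightarrow> strict_mono (spos q)"
  by (simp add: strict_mono_Suc_iff spos_Suc side_pos)

lemma fst_singular_pt: "p \<in> singular_pts q \<Longrightarrow> fst p \<in> range (spos q)"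
  unfolding singular_pts_def by (auto intro: range_eqI[of _ _ 0])

lemma singular_pt_not_between:
  assumes "q \<ge> 1" "spos q j < x" "x < spos q (Suc j)"
  shows "(x, y) \<notin> singular_pts q"
proof
  assume "(x, y) \<in> singular_pts q"
  then obtain i where "x = spos q i"
    using fst_singular_pt by fastforce
  with assms have "j < i" "i < Suc j"
    using strict_mono_less[OF strict_mono_spos] by auto
  then show False by simp
qed

lemma singular_pt_on_edge:
  assumes "q \<ge> 1" "i \<ge> 1" "(spos q i, y) \<in> singular_pts q"
  shows "y = 0 \<or> y = side q i \<or> y = side q (Suc i)"
proof -
  have inj: "spos q i = spos q j \<longleftrightarrow> i = j" for j
    using strict_mono_eq[OF strict_mono_spos[OF \<open>q \<ge> 1\<close>]] .
  have "(\<exists>k. spos q i = spos q k \<and> y = 0) \<or> (\<exists>k. spos q i = 0) \<or>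
      (\<exists>k. spos q i = spos q k \<and> y = side q k) \<or> (\<exists>k\<ge>1. spos q i = spos q (k - 1) \<and> y = side q k)"
    using assms(3) unfolding singular_pts_def by auto
  moreover have "spos q i \<noteq> 0"
    using inj[of 0] assms(2) by simp
  ultimately show ?thesis
    unfolding inj using Suc_pred' by fastforce
qed

lemma glue1_not_singular:
  assumes "q \<ge> 1" "glue1 q b a"
  shows "b \<notin> singular_pts q"
  using assms(2) unfolding glue1_def
proof (elim disjE exE conjE)
  fix m assume "m \<ge> 1" "spos q (m - 1) < fst b" "fst b < spos q m"
  then show ?thesis
    using singular_pt_not_between[OF assms(1), of "m - 1" "fst b" "snd b"] by simp
next
  fix m assume m: "m \<ge> 1" "fst b = spos q m" "side q (Suc m) < snd b" "snd b < side q m"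
  have "0 < snd b"
    using m(3) side_pos[OF assms(1)] by (meson less_trans)
  with m show ?thesis
    using singular_pt_on_edge[OF assms(1) m(1), of "snd b"] by (metis less_irrefl prod.collapse)
qed

section \<open>Segments inside vertex-free rectangles\<close>

lemma closed_segment_subset_rectangle:
  fixes a b :: "real \<times> real"
  assumes "fst a \<le> fst b" "snd a \<le> snd b"
  shows "closed_segment a b \<subseteq> {fst a..fst b} \<times> {snd a..snd b}"
  using assms by (intro closed_segment_subset convex_Times) (auto simp: mem_Times_iff)

lemma open_segment_subset_rectangle:
  fixes a b :: "real \<times> real"
  assumes "fst a < fst b" "snd a < snd b"
  shows "open_segment a b \<subseteq> {fst a<..<fst b} \<times> {snd a<..<snd b}"
proof
  fix p assume "p \<in> open_segment a b"
  then obtain u :: real where u: "0 < u" "u < 1" and p: "p = (1 - u) *\<^sub>R a + u *\<^sub>R b"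
    unfolding in_segment by blast
  have "fst p = (1 - u) * fst a + u * fst b" "snd p = (1 - u) * snd a + u * snd b"
    using p by simp_all
  then have "fst p = fst a + u * (fst b - fst a)" "snd p = snd a + u * (snd b - snd a)"
    by (simp_all add: algebra_simps)
  moreover have "0 < u * (fst b - fst a)" "u * (fst b - fst a) < fst b - fst a"
    "0 < u * (snd b - snd a)" "u * (snd b - snd a) < snd b - snd a"
    using u assms by simp_all
  ultimately show "p \<in> {fst a<..<fst b} \<times> {snd a<..<snd b}"
    unfolding mem_Times_iff greaterThanLessThan_iff by (intro conjI) linarith+
qed

definition clear_rectangle :: "nat \<Rightarrow> real \<times> real \<Rightarrow> real \<times> real \<Rightarrow> bool" where
  "clear_rectangle q a b \<longleftrightarrow>
     {fst a..fst b} \<times> {snd a..snd b} \<subseteq> polygon q \<and>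
     {fst a<..<fst b} \<times> {snd a<..<snd b} \<inter> singular_pts q = {}"

lemma clear_rectangleI:
  assumes "\<And>x y. fst a \<le> x \<Longrightarrow> x \<le> fst b \<Longrightarrow> snd a \<le> y \<Longrightarrow> y \<le> snd b \<Longrightarrow> (x, y) \<in> polygon q"
    and "\<And>x y. fst a < x \<Longrightarrow> x < fst b \<Longrightarrow> snd a < y \<Longrightarrow> y < snd b \<Longrightarrow> (x, y) \<notin> singular_pts q"
  shows "clear_rectangle q a b"
proof -
  have "p \<in> polygon q" if "p \<in> {fst a..fst b} \<times> {snd a..snd b}" for p
    using that assms(1)[of "fst p" "snd p"] by (simp add: mem_Times_iff)
  moreover have "p \<notin> singular_pts q" if "p \<in> {fst a<..<fst b} \<times> {snd a<..<snd b}" for p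
    using that assms(2)[of "fst p" "snd p"] by (simp add: mem_Times_iff)
  ultimately show ?thesis
    unfolding clear_rectangle_def by blast
qed

lemma clear_rectangle_segment:
  assumes "clear_rectangle q a b" "fst a < fst b" "snd a < snd b"
  shows "closed_segment a b \<subseteq> polygon q" "open_segment a b \<inter> singular_pts q = {}"
  using assms closed_segment_subset_rectangle[of a b] open_segment_subset_rectangle[of a b]
  unfolding clear_rectangle_def by auto

lemma clear_rectangle_in_square:
  assumes "q \<ge> 1" "spos q j \<le> fst a" "fst b \<le> spos q (Suc j)" "0 \<le> snd a" "snd b \<le> side q (Suc j)"
  shows "clear_rectangle q a b"
proof (rule clear_rectangleI)
  fix x y assume "fst a \<le> x" "x \<le> fst b" "snd a \<le> y" "y \<le> snd b"
  then have "(x, y) \<in> square q (Suc j)"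
    using assms unfolding square_def by auto
  then show "(x, y) \<in> polygon q"
    unfolding polygon_def by auto
next
  fix x y assume "fst a < x" "x < fst b"
  then show "(x, y) \<notin> singular_pts q"
    using singular_pt_not_between[OF assms(1), of j x y] assms by auto
qed

lemma clear_rectangle_in_two_squares:
  assumes "q \<ge> 1" "spos q j \<le> fst a" "fst b \<le> spos q (Suc (Suc j))" "0 \<le> snd a"
    "snd b \<le> side q (Suc (Suc j))"
  shows "clear_rectangle q a b"
proof (rule clear_rectangleI)
  have lower: "side q (Suc (Suc j)) \<le> side q (Suc j)"
    using side_antimono[OF assms(1)] by simp
  fix x y assume xy: "fst a \<le> x" "x \<le> fst b" "snd a \<le> y" "y \<le> snd b"
  show "(x, y) \<in> polygon q"
  proof (cases "x \<le> spos q (Suc j)")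
    case True
    then have "(x, y) \<in> square q (Suc j)"
      using assms xy lower unfolding square_def by auto
    then show ?thesis unfolding polygon_def by auto
  next
    case False
    then have "(x, y) \<in> square q (Suc (Suc j))"
      using assms xy unfolding square_def by auto
    then show ?thesis unfolding polygon_def by auto
  qed
next
  fix x y assume xy: "fst a < x" "x < fst b" "snd a < y" "y < snd b"
  show "(x, y) \<notin> singular_pts q"
  proof (cases "x = spos q (Suc j)")
    case True
    have "0 < y" "y < side q (Suc (Suc j))" "side q (Suc (Suc j)) \<le> side q (Suc j)"
      using assms xy side_antimono[OF assms(1)] by auto
    then show ?thesis
      using True singular_pt_on_edge[OF assms(1), of "Suc j" y] by auto
  next
    case False
    then show ?thesis
      using singular_pt_not_between[OF assms(1), of j x y]
        singular_pt_not_between[OF assms(1), of "Suc j" x y] assms xy by fastforce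
  qed
qed

lemma saddle_connection_fromI:
  assumes "q \<ge> 1" "p \<in> singular_pts q" "n \<ge> 1" "a 0 = p"
    and "\<And>i. i < n \<Longrightarrow> t i > 0"
    and "\<And>i. i < n \<Longrightarrow> b i = a i + t i *\<^sub>R d"
    and "\<And>i. i < n \<Longrightarrow> closed_segment (a i) (b i) \<subseteq> polygon q"
    and "\<And>i. i < n \<Longrightarrow> open_segment (a i) (b i) \<inter> singular_pts q = {}"
    and glue: "\<And>i. Suc i < n \<Longrightarrow> glue1 q (b i) (a (Suc i))"
    and "b (n - 1) \<in> singular_pts q"
  shows "saddle_connection_from q p d"
proof -
  have segments: "\<forall>i<n. t i > 0 \<and> b i = a i + t i *\<^sub>R d \<and> closed_segment (a i) (b i) \<subseteq> polygon q"
    by (intro allI impI conjI assms)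
  have interiors: "\<forall>i<n. open_segment (a i) (b i) \<inter> singular_pts q = {}"
    by (intro allI impI assms)
  have gluings: "\<forall>i. Suc i < n \<longrightarrow> glued q (b i) (a (Suc i)) \<and> b i \<notin> singular_pts q"
    unfolding glued_def
    by (intro allI impI conjI disjI1 glue1_not_singular[OF assms(1) glue] glue)
  show ?thesis
    unfolding saddle_connection_from_def
    by (rule conjI[OF assms(2)], rule exI[of _ n], rule exI[of _ a], rule exI[of _ b], rule exI[of _ t])
      (intro conjI assms(3,4,10) segments interiors gluings)
qed

section \<open>The trajectory of slope q / (2q - 1) from the lower right corner of square k\<close>

lemma mult_add_div_mod_eq:
  fixes r p n :: nat
  assumes "p < n"
  shows "(r * n + p) div n = r" "(r * n + p) mod n = p"
  using assms by simp_all

locale armadillo_trajectory =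
  fixes q k :: nat
  assumes q_ge_2: "q \<ge> 2" and k_ge_2: "k \<ge> 2"
begin

lemma q_ge_1: "q \<ge> 1"
  using q_ge_2 by simp

definition width :: real where
  "width = side q (Suc k)"

definition rise :: "real \<Rightarrow> real" where
  "rise h = real q * h / (2 * real q - 1)"

(* Lap r meets the top edge of square j at abscissa crossing r j. *)
definition crossing :: "nat \<Rightarrow> nat \<Rightarrow> real" where
  "crossing r j = spos q j - side q (Suc j) - real r * width"

(* Phase 0 of lap r crosses square 1, phase 1 reaches its top, phase p + 1 climbs from the
   bottom of square p to the top of square p + 1, and phase k + 1 leaves square k on the right. *)
definition lap_start :: "nat \<Rightarrow> nat \<Rightarrow> real \<times> real" where
  "lap_start r p =
     (if p = 0 then (0, real r * rise width)
      else if p = 1 then (0, real r * rise width + rise 1)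
      else (crossing r (p - 1), 0))"

definition lap_end :: "nat \<Rightarrow> nat \<Rightarrow> real \<times> real" where
  "lap_end r p =
     (if p = 0 then (1, real r * rise width + rise 1)
      else if p \<le> k then (crossing r p, side q p)
      else (spos q k, real (Suc r) * rise width))"

definition trajectory_segment :: "real \<times> real \<Rightarrow> real \<times> real \<Rightarrow> bool" where
  "trajectory_segment a b \<longleftrightarrow>
     fst a < fst b \<and> snd b - snd a = rise (fst b - fst a) \<and> clear_rectangle q a b"

lemma width_pos: "0 < width"
  using side_pos[OF q_ge_1] by (simp add: width_def)

lemma side_k: "side q k = real q * width"
  using side_eq_mult_side_Suc[OF q_ge_1, of k] k_ge_2 by (simp add: width_def)

lemma side_Suc_Suc_k: "real q * side q (Suc (Suc k)) = width"
  using side_eq_mult_side_Suc[OF q_ge_1, of "Suc k"] by (simp add: width_def)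

lemma spos_k: "spos q k = spos q (k - 1) + real q * width"
  using spos_Suc[of q "k - 1"] k_ge_2 side_k by simp

lemma rise_pos: "0 < h \<Longrightarrow> 0 < rise h"
  using q_ge_2 by (simp add: rise_def)

lemma rise_less: "0 < h \<Longrightarrow> rise h < h"
  using q_ge_2 by (simp add: rise_def field_simps)

lemma less_double_rise: "0 < h \<Longrightarrow> h < 2 * rise h"
  using q_ge_2 by (simp add: rise_def field_simps)

lemma less_q_mult_rise: "0 < h \<Longrightarrow> h < real q * rise h"
proof -
  assume "0 < h"
  moreover have "2 * rise h \<le> real q * rise h"
    using q_ge_2 rise_pos[OF \<open>0 < h\<close>] by (intro mult_right_mono) simp_all
  ultimately show ?thesis
    using less_double_rise[of h] by linarith
qed

lemma rise_mult: "rise (c * h) = c * rise h"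
  by (simp add: rise_def)

lemma trajectory_segmentD:
  assumes "trajectory_segment a b"
  defines "t \<equiv> (fst b - fst a) / (2 * real q - 1)"
  shows "0 < t" "b = a + t *\<^sub>R (real (2 * q - 1), real q)"
    "closed_segment a b \<subseteq> polygon q" "open_segment a b \<inter> singular_pts q = {}"
proof -
  have run: "fst a < fst b" and rise: "snd b - snd a = rise (fst b - fst a)"
    and clear: "clear_rectangle q a b"
    using assms(1) unfolding trajectory_segment_def by auto
  have c: "2 * real q - 1 > 0"
    using q_ge_2 by simp
  show "0 < t"
    unfolding t_def using run c by simp
  have "fst b = fst a + t * (2 * real q - 1)" "snd b = snd a + t * real q"
    using rise c unfolding t_def rise_def by (simp_all add: field_simps)
  then show "b = a + t *\<^sub>R (real (2 * q - 1), real q)"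
    using q_ge_2 by (simp add: prod_eq_iff of_nat_diff)
  have "snd a < snd b"
    using rise rise_pos[of "fst b - fst a"] run by simp
  then show "closed_segment a b \<subseteq> polygon q" "open_segment a b \<inter> singular_pts q = {}"
    using clear_rectangle_segment[OF clear run] by simp_all
qed

lemma crossing_Suc: "crossing r (Suc p) = crossing r p + (2 * real q - 1) * side q (Suc (Suc p))"
  using side_eq_mult_side_Suc[OF q_ge_1, of "Suc p"]
  by (simp add: crossing_def spos_Suc algebra_simps)

lemma rise_crossing_Suc: "rise (crossing r (Suc p) - crossing r p) = side q (Suc p)"
  using side_eq_mult_side_Suc[OF q_ge_1, of "Suc p"] q_ge_2
  by (simp add: crossing_Suc rise_def)

lemma rise_crossing_1: "real r * rise width + rise 1 + rise (crossing r 1) = 1"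
proof -
  have "crossing r 1 = 1 - 1 / real q - real r * width"
    by (simp add: crossing_def spos_def side_def)
  then have "real r * (real q * width) + real q + real q * crossing r 1 = 2 * real q - 1"
    using q_ge_2 by (simp add: field_simps)
  then show ?thesis
    using q_ge_2 unfolding rise_def by (simp add: add_divide_distrib[symmetric])
qed

lemma crossing_last: "crossing (q - 1) k = spos q (k - 1)"
  using q_ge_2 by (simp add: crossing_def spos_k width_def of_nat_diff algebra_simps)

lemma crossing_less_spos: "crossing r p < spos q p"
proof -
  have "0 \<le> real r * width"
    using width_pos by simp
  then show ?thesis
    using side_pos[OF q_ge_1, of "Suc p"] by (simp add: crossing_def)
qed

lemma spos_less_crossing:
  assumes "1 \<le> p" "p \<le> k" "r \<le> q - 1" "\<not> (r = q - 1 \<and> p = k)"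
  shows "spos q (p - 1) < crossing r p"
proof -
  have r: "real r \<le> real q - 1"
    using assms(3) q_ge_2 by (simp add: of_nat_diff)
  have "real r * width < (real q - 1) * side q (Suc p)"
  proof (cases "p = k")
    case True
    then have "real r < real q - 1"
      using assms(3,4) q_ge_2 by (simp add: of_nat_diff)
    then show ?thesis
      using True width_pos by (simp add: width_def)
  next
    case False
    then have "real q * width \<le> side q (Suc p)"
      using side_antimono[OF q_ge_1] assms(2) side_k by (metis Suc_leI le_neq_implies_less)
    have "real r * width \<le> (real q - 1) * width"
      using r width_pos by (intro mult_right_mono) simp_all
    also have "\<dots> < (real q - 1) * (real q * width)"
      using q_ge_2 width_pos by (intro mult_strict_left_mono) simp_all
    also have "\<dots> \<le> (real q - 1) * side q (Suc p)"
      using \<open>real q * width \<le> side q (Suc p)\<close> q_ge_2 by (intro mult_left_mono) simp_all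
    finally show ?thesis .
  qed
  moreover have "spos q p = spos q (p - 1) + real q * side q (Suc p)"
    using spos_Suc[of q "p - 1"] side_eq_mult_side_Suc[OF q_ge_1 assms(1)] assms(1) by simp
  ultimately show ?thesis
    unfolding crossing_def by (simp add: algebra_simps)
qed

lemma lap_exit_height_less_1: "r \<le> q - 1 \<Longrightarrow> real r * rise width + rise 1 < 1"
  using spos_less_crossing[of 1 r] k_ge_2 rise_pos rise_crossing_1[of r] by fastforce

lemma segment_initial: "trajectory_segment (spos q k, 0) (spos q (Suc k), rise width)"
  unfolding trajectory_segment_def
proof (intro conjI)
  show "clear_rectangle q (spos q k, 0) (spos q (Suc k), rise width)"
    using rise_less[OF width_pos] by (intro clear_rectangle_in_square[OF q_ge_1, of k]) (simp_all add: width_def)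
qed (use width_pos in \<open>simp_all add: spos_Suc width_def\<close>)

lemma segment_across_square_1:
  assumes "r \<le> q - 1"
  shows "trajectory_segment (lap_start r 0) (lap_end r 0)"
  unfolding trajectory_segment_def
proof (intro conjI)
  show "clear_rectangle q (lap_start r 0) (lap_end r 0)"
    using lap_exit_height_less_1[OF assms] rise_pos[OF width_pos]
    by (intro clear_rectangle_in_square[OF q_ge_1, of 0]) (simp_all add: lap_start_def lap_end_def spos_Suc)
qed (simp_all add: lap_start_def lap_end_def)

lemma segment_to_top_of_square_1:
  assumes "r \<le> q - 1"
  shows "trajectory_segment (lap_start r 1) (lap_end r 1)"
proof -
  have "0 < crossing r 1"
    using spos_less_crossing[of 1 r] assms k_ge_2 by simp
  moreover have "crossing r 1 \<le> 1"
    using crossing_less_spos[of r 1] by (simp add: spos_Suc)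
  ultimately show ?thesis
    unfolding trajectory_segment_def
    using k_ge_2 rise_crossing_1[of r] rise_pos[OF width_pos] rise_pos[of 1]
    by (auto simp: lap_start_def lap_end_def spos_Suc intro!: clear_rectangle_in_square[OF q_ge_1, of 0])
qed

lemma segment_through_two_squares:
  assumes "r \<le> q - 1" "p + 2 \<le> k"
  shows "trajectory_segment (lap_start r (p + 2)) (lap_end r (p + 2))"
proof -
  have "spos q p \<le> crossing r (Suc p)"
    using spos_less_crossing[of "Suc p" r] assms by simp
  moreover have "crossing r (Suc p) < crossing r (Suc (Suc p))"
    using side_pos[OF q_ge_1] q_ge_2 by (simp add: crossing_Suc)
  ultimately show ?thesis
    unfolding trajectory_segment_def
    using assms(2) crossing_less_spos[of r "Suc (Suc p)"] rise_crossing_Suc[of r "Suc p"]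
    by (auto simp: lap_start_def lap_end_def intro!: clear_rectangle_in_two_squares[OF q_ge_1, of p])
qed

lemma segment_to_right_edge_of_square_k:
  assumes "r \<le> q - 1"
  shows "trajectory_segment (lap_start r (Suc k)) (lap_end r (Suc k))"
proof -
  have r: "real (Suc r) \<le> real q"
    using assms q_ge_2 by simp
  have crossing: "crossing r k = spos q k - real (Suc r) * width"
    by (simp add: crossing_def width_def algebra_simps)
  have width_le: "real (Suc r) * width \<le> real q * width"
    using r width_pos by (intro mult_right_mono) simp_all
  moreover have "real (Suc r) * rise width \<le> real (Suc r) * width"
    using rise_less[OF width_pos] by (intro mult_left_mono) simp_all
  ultimately have "real (Suc r) * rise width \<le> real q * width"
    by linarith
  then show ?thesis
    unfolding trajectory_segment_def
    using k_ge_2 width_pos width_le rise_mult[of "real (Suc r)" width] spos_k side_k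
    by (auto simp: lap_start_def lap_end_def crossing
        intro!: clear_rectangle_in_square[OF q_ge_1, of "k - 1"])
qed

lemma segment_lap:
  assumes "r \<le> q - 1" "p \<le> Suc k"
  shows "trajectory_segment (lap_start r p) (lap_end r p)"
proof -
  have "p = 0 \<or> p = 1 \<or> (2 \<le> p \<and> p \<le> k) \<or> p = Suc k"
    using assms(2) by linarith
  then show ?thesis
  proof (elim disjE conjE)
    assume "2 \<le> p" "p \<le> k"
    moreover have "p - 2 + 2 = p"
      using \<open>2 \<le> p\<close> by simp
    ultimately show ?thesis
      using segment_through_two_squares[OF assms(1), of "p - 2"] by metis
  qed (use segment_across_square_1 segment_to_top_of_square_1
      segment_to_right_edge_of_square_k assms(1) in simp_all)
qed

lemma glue_initial: "glue1 q (spos q (Suc k), rise width) (lap_start 1 0)"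
proof -
  have "real q * side q (Suc (Suc k)) < real q * rise width"
    using side_Suc_Suc_k less_q_mult_rise[OF width_pos] by simp
  then have "side q (Suc (Suc k)) < rise width"
    using q_ge_2 by simp
  moreover have "rise width < side q (Suc k)"
    using rise_less[OF width_pos] by (simp add: width_def)
  ultimately show ?thesis
    unfolding glue1_def by (auto simp: lap_start_def)
qed

lemma glue_right_edge_of_square_1:
  assumes "r \<le> q - 1"
  shows "glue1 q (lap_end r 0) (lap_start r 1)"
proof -
  have "1 / real q < rise 1"
    using less_q_mult_rise[of 1] q_ge_2 by (simp add: field_simps)
  moreover have "0 \<le> real r * rise width"
    using rise_pos[OF width_pos] by simp
  ultimately have "side q (Suc (Suc 0)) < real r * rise width + rise 1"
    by (simp add: side_def)
  then show ?thesis
    using lap_exit_height_less_1[OF assms] spos_Suc[of q 0]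
    unfolding glue1_def by (auto simp: lap_start_def lap_end_def intro!: exI[of _ 1])
qed

lemma glue_top_edge:
  assumes "r \<le> q - 1" "1 \<le> p" "p \<le> k" "\<not> (r = q - 1 \<and> p = k)"
  shows "glue1 q (lap_end r p) (lap_start r (Suc p))"
  using spos_less_crossing[OF assms(2,3,1,4)] crossing_less_spos[of r p] assms(2,3)
  unfolding glue1_def by (auto simp: lap_start_def lap_end_def intro!: exI[of _ p])

lemma glue_lap:
  assumes "r \<le> q - 1" "p \<le> k" "\<not> (r = q - 1 \<and> p = k)"
  shows "glue1 q (lap_end r p) (lap_start r (Suc p))"
proof (cases "p = 0")
  case True
  then show ?thesis
    using glue_right_edge_of_square_1[OF assms(1)] by simp
next
  case False
  then show ?thesis
    using glue_top_edge[OF assms(1) _ assms(2,3)] by simp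
qed

lemma glue_right_edge_of_square_k:
  assumes "1 \<le> r" "r + 2 \<le> q"
  shows "glue1 q (lap_end r (Suc k)) (lap_start (Suc r) 0)"
proof -
  have "width < 2 * rise width"
    using less_double_rise[OF width_pos] .
  also have "\<dots> \<le> real (Suc r) * rise width"
    using assms(1) rise_pos[OF width_pos] by (intro mult_right_mono) simp_all
  finally have lower: "side q (Suc k) < real (Suc r) * rise width"
    by (simp add: width_def)
  have "real (Suc r) * rise width \<le> real (Suc r) * width"
    using rise_less[OF width_pos] by (intro mult_left_mono) simp_all
  also have "\<dots> < real q * width"
    using assms(2) width_pos by (intro mult_strict_right_mono) simp_all
  finally have upper: "real (Suc r) * rise width < side q k"
    using side_k by simp
  show ?thesis
    using lower upper k_ge_2
    unfolding glue1_def by (auto simp: lap_start_def lap_end_def intro!: exI[of _ k])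
qed

lemma lap_end_last: "lap_end (q - 1) k \<in> singular_pts q"
  using crossing_last k_ge_2 unfolding singular_pts_def lap_end_def
  by (auto intro!: exI[of _ k])

(* Segment 0 crosses square k + 1; segment i > 0 is phase p of lap r, where i + k + 1 = r (k + 2) + p. *)
definition lap_of :: "nat \<Rightarrow> nat" where
  "lap_of i = (i + k + 1) div (k + 2)"

definition phase_of :: "nat \<Rightarrow> nat" where
  "phase_of i = (i + k + 1) mod (k + 2)"

definition chain_length :: nat where
  "chain_length = (q - 1) * (k + 2)"

definition chain_start :: "nat \<Rightarrow> real \<times> real" where
  "chain_start i = (if i = 0 then (spos q k, 0) else lap_start (lap_of i) (phase_of i))"

definition chain_end :: "nat \<Rightarrow> real \<times> real" where
  "chain_end i = (if i = 0 then (spos q (Suc k), rise width) else lap_end (lap_of i) (phase_of i))"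

lemma lap_phase_decomposition: "i + k + 1 = lap_of i * (k + 2) + phase_of i"
  unfolding lap_of_def phase_of_def by (rule div_mult_mod_eq[symmetric])

lemma lap_phase_eqI:
  assumes "i + k + 1 = r * (k + 2) + p" "p < k + 2"
  shows "lap_of i = r" "phase_of i = p"
  unfolding lap_of_def phase_of_def assms(1) by (fact mult_add_div_mod_eq[OF assms(2)])+

lemma phase_of_le: "phase_of i \<le> Suc k"
  unfolding phase_of_def
  using mod_less_divisor[of "k + 2" "i + k + 1"] by linarith

lemma lap_phase_0: "lap_of 0 = 0" "phase_of 0 = Suc k"
  by (simp_all add: lap_of_def phase_of_def)

lemma lap_phase_Suc:
  "phase_of i \<le> k \<Longrightarrow> lap_of (Suc i) = lap_of i \<and> phase_of (Suc i) = Suc (phase_of i)"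
  "phase_of i = Suc k \<Longrightarrow> lap_of (Suc i) = Suc (lap_of i) \<and> phase_of (Suc i) = 0"
  unfolding lap_of_def phase_of_def by (auto simp: div_Suc mod_Suc)

lemma lap_of_ge_1: "1 \<le> i \<Longrightarrow> 1 \<le> lap_of i"
  unfolding lap_of_def using div_le_mono[of "k + 2" "i + k + 1" "k + 2"] by simp

lemma lap_of_le:
  assumes "i < chain_length"
  shows "lap_of i \<le> q - 1"
proof (rule ccontr)
  assume "\<not> lap_of i \<le> q - 1"
  then have "q * (k + 2) \<le> lap_of i * (k + 2)"
    by (intro mult_le_mono1) simp
  moreover have "q * (k + 2) = (q - 1) * (k + 2) + (k + 2)"
    using q_ge_1 by (cases q) simp_all
  ultimately show False
    using assms lap_phase_decomposition[of i] unfolding chain_length_def by linarith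
qed

lemma phase_of_last_lap:
  assumes "i < chain_length" "lap_of i = q - 1"
  shows "phase_of i \<le> k"
  using assms lap_phase_decomposition[of i] unfolding chain_length_def by simp

lemma chain_length_ge_2: "2 \<le> chain_length"
proof -
  have "1 * 2 \<le> (q - 1) * (k + 2)"
    using q_ge_2 by (intro mult_le_mono) simp_all
  then show ?thesis
    unfolding chain_length_def by simp
qed

lemma lap_phase_last: "lap_of (chain_length - 1) = q - 1" "phase_of (chain_length - 1) = k"
proof -
  have "chain_length - 1 + k + 1 = (q - 1) * (k + 2) + k"
    using chain_length_ge_2 unfolding chain_length_def by linarith
  then show "lap_of (chain_length - 1) = q - 1" "phase_of (chain_length - 1) = k"
    by (rule lap_phase_eqI, simp)+
qed

lemma chain_segment:
  assumes "i < chain_length"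
  shows "trajectory_segment (chain_start i) (chain_end i)"
  using segment_initial segment_lap[OF lap_of_le[OF assms] phase_of_le]
  by (simp add: chain_start_def chain_end_def)

lemma chain_glue:
  assumes "Suc i < chain_length"
  shows "glue1 q (chain_end i) (chain_start (Suc i))"
proof (cases "i = 0")
  case True
  then show ?thesis
    using glue_initial lap_phase_Suc(2)[of 0] lap_phase_0 by (simp add: chain_start_def chain_end_def)
next
  case False
  have r: "1 \<le> lap_of i" "lap_of i \<le> q - 1"
    using False lap_of_ge_1 lap_of_le[of i] assms by simp_all
  show ?thesis
  proof (cases "phase_of i \<le> k")
    case True
    have "\<not> (lap_of i = q - 1 \<and> phase_of i = k)"
      using phase_of_last_lap[OF assms] lap_phase_Suc(1)[OF True] by auto
    then show ?thesis
      using glue_lap[OF r(2) True] lap_phase_Suc(1)[OF True] False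
      by (simp add: chain_start_def chain_end_def)
  next
    case False
    then have phase: "phase_of i = Suc k"
      using phase_of_le[of i] by simp
    have "lap_of i + 2 \<le> q"
      using lap_of_le[OF assms] lap_phase_Suc(2)[OF phase] q_ge_2 by simp
    then show ?thesis
      using glue_right_edge_of_square_k[OF r(1)] lap_phase_Suc(2)[OF phase] phase \<open>i \<noteq> 0\<close>
      by (simp add: chain_start_def chain_end_def)
  qed
qed

lemma chain_end_last: "chain_end (chain_length - 1) \<in> singular_pts q"
  using lap_end_last lap_phase_last chain_length_ge_2 by (simp add: chain_end_def)

end

theorem theorem3p2:
  fixes q k :: nat
  assumes "q \<ge> 2" and "k > 2"
  shows "saddle_connection_from q (spos q k, 0) (real (2 * q - 1), real q)"
proof -
  interpret armadillo_trajectory q k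
    using assms by unfold_locales simp_all
  let ?t = "\<lambda>i. (fst (chain_end i) - fst (chain_start i)) / (2 * real q - 1)"
  show ?thesis
  proof (rule saddle_connection_fromI[where n = chain_length and a = chain_start and b = chain_end and t = ?t])
    show "(spos q k, 0) \<in> singular_pts q"
      unfolding singular_pts_def by blast
  qed (use q_ge_1 chain_length_ge_2 chain_glue chain_end_last
      trajectory_segmentD[OF chain_segment] in \<open>simp_all add: chain_start_def\<close>)
qed

end
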